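(* Let $\lambda$ be Lebesgue measure on $[0,1]$ and let $T:[0,1]\to[0,1]$ be an invertible, ergodic, $\lambda$-preserving transformation which is rigid rank 1, with associated numbers $n_k$ and sets $A_k$ (as in the context). Let $\mathcal{R}_k=\bigcup_{i=0}^{n_k-1}T^iA_k$ and $$\tilde{\mathcal{R}}_k=\bigcup_{i=0}^{n_k-1}T^i\big(A_k\cap T^{-n_k}A_k\cap T^{-2n_k}A_k\cap T^{n_k}A_k\cap T^{2n_k}A_k\big).$$ Let $\sigma$ be a self-joining of $([0,1],T,\lambda)$ with disintegration $(\sigma_x)_{x\in[0,1]}$ over the first coordinate, chosen so that $\sigma_{Tx}(TE)=\sigma_x(E)$ for every $x\in[0,1]$ and every Borel $E\subset[0,1]$. For $0\le \ell<n_k$, $x\in T^\ell A_k$ and $0\le i<n_k$, let $a_i\in\{0,\dots,n_k-1\}$ be the integer with $a_i\equiv i+\ell \pmod{n_k}$ and set $c_i(x)=\sigma_x(T^{a_i}A_k\cap\mathcal{R}_k)$. Then for every $0\le\ell<n_k$, every $x\in T^\ell A_k$ and every integer $i$ with $-\ell\le i<n_k-\ell$, $$\sum_{j=0}^{n_k-1}|c_j(x)-c_j(T^ix)|\le 2\sigma_x(\tilde{\mathcal{R}}_k^c).$$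
   Context: $T$ is called rigid rank 1 if there exist positive integers $n_j$ and measurable sets $A_j\subset[0,1]$ such that: (1) $\lim_{j\to\infty}\lambda\big(\bigcup_{i=0}^{n_j-1}T^iA_j\big)=1$; (2) the sets $A_j,TA_j,\dots,T^{n_j-1}A_j$ are pairwise disjoint; (3) $\lim_{j\to\infty}\lambda(T^{n_j}A_j\cap A_j)/\lambda(A_j)=1$; (4) for every $\varepsilon>0$ there exist, for each $j$, metric balls $B^{(j)}_0,\dots,B^{(j)}_{n_j-1}\subset[0,1]$ of diameter at most $\varepsilon$ such that $\lim_{j\to\infty}\sum_{i=0}^{n_j-1}\lambda(T^iA_j\setminus B^{(j)}_i)=0$. A self-joining of $([0,1],T,\lambda)$ is a $T\times T$-invariant Borel probability measure on $[0,1]\times[0,1]$ both of whose marginals equal $\lambda$; $\sigma_x$ is regarded as a probability measure on $[0,1]$. By disjointness of the levels $T^\ell A_k$, the index $\ell$ with $x\in T^\ell A_k$ is unique, so $c_i(x)$ is well defined (and $T^ix\in T^{\ell+i}A_k$ for $-\ell\le i<n_k-\ell$, so $c_j(T^ix)$ is defined with $\ell+i$ in place of $\ell$). *)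

theory Defs
  imports "HOL-Probability.Probability"
begin

definition lam :: "real measure" where
  "lam = restrict_space lborel {0..1}"

definition Tz :: "(real \<Rightarrow> real) \<Rightarrow> int \<Rightarrow> real \<Rightarrow> real" where
  "Tz T i = (if 0 \<le> i then T ^^ nat i else (inv_into {0..1} T) ^^ nat (- i))"

definition invertible_mpt :: "(real \<Rightarrow> real) \<Rightarrow> bool" where
  "invertible_mpt T \<longleftrightarrow>
     bij_betw T {0..1} {0..1} \<and>
     T \<in> lam \<rightarrow>\<^sub>M lam \<and> inv_into {0..1} T \<in> lam \<rightarrow>\<^sub>M lam \<and>
     distr lam lam T = lam"

definition ergodic :: "(real \<Rightarrow> real) \<Rightarrow> bool" where
  "ergodic T \<longleftrightarrow> (\<forall>E \<in> sets lam. T -` E \<inter> {0..1} = E \<longrightarrow>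
                      measure lam E = 0 \<or> measure lam E = 1)"

definition ball01 :: "real \<Rightarrow> real \<Rightarrow> real set" where
  "ball01 c r = {y \<in> {0..1}. dist c y < r}"

definition rigid_rank1 :: "(real \<Rightarrow> real) \<Rightarrow> (nat \<Rightarrow> nat) \<Rightarrow> (nat \<Rightarrow> real set) \<Rightarrow> bool" where
  "rigid_rank1 T n A \<longleftrightarrow>
     (\<forall>j. 0 < n j \<and> A j \<in> sets lam) \<and>
     (\<lambda>j. measure lam (\<Union>i<n j. (T ^^ i) ` A j)) \<longlonglongrightarrow> 1 \<and>
     (\<forall>j. disjoint_family_on (\<lambda>i. (T ^^ i) ` A j) {..<n j}) \<and>
     (\<lambda>j. measure lam ((T ^^ n j) ` A j \<inter> A j) / measure lam (A j)) \<longlonglongrightarrow> 1 \<and>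
     (\<forall>\<epsilon>>0. \<exists>B :: nat \<Rightarrow> nat \<Rightarrow> real set.
        (\<forall>j i. i < n j \<longrightarrow> (\<exists>c r. c \<in> {0..1} \<and> B j i = ball01 c r) \<and> diameter (B j i) \<le> \<epsilon>) \<and>
        (\<lambda>j. \<Sum>i<n j. measure lam ((T ^^ i) ` A j - B j i)) \<longlonglongrightarrow> 0)"

definition self_joining :: "(real \<Rightarrow> real) \<Rightarrow> (real \<times> real) measure \<Rightarrow> bool" where
  "self_joining T \<sigma> \<longleftrightarrow>
     prob_space \<sigma> \<and> sets \<sigma> = sets (lam \<Otimes>\<^sub>M lam) \<and>
     distr \<sigma> lam fst = lam \<and> distr \<sigma> lam snd = lam \<and>
     distr \<sigma> \<sigma> (\<lambda>(x, y). (T x, T y)) = \<sigma>"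

definition disintegration :: "(real \<times> real) measure \<Rightarrow> (real \<Rightarrow> real measure) \<Rightarrow> bool" where
  "disintegration \<sigma> \<sigma>x \<longleftrightarrow>
     (\<forall>x\<in>{0..1}. prob_space (\<sigma>x x) \<and> sets (\<sigma>x x) = sets lam) \<and>
     (\<forall>B\<in>sets lam. (\<lambda>x. emeasure (\<sigma>x x) B) \<in> borel_measurable lam) \<and>
     (\<forall>A\<in>sets lam. \<forall>B\<in>sets lam.
        emeasure \<sigma> (A \<times> B) = (\<integral>\<^sup>+ x. indicator A x * emeasure (\<sigma>x x) B \<partial>lam))"

definition Rk :: "(real \<Rightarrow> real) \<Rightarrow> (nat \<Rightarrow> nat) \<Rightarrow> (nat \<Rightarrow> real set) \<Rightarrow> nat \<Rightarrow> real set" where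
  "Rk T n A k = (\<Union>i<n k. (T ^^ i) ` A k)"

definition Rtk :: "(real \<Rightarrow> real) \<Rightarrow> (nat \<Rightarrow> nat) \<Rightarrow> (nat \<Rightarrow> real set) \<Rightarrow> nat \<Rightarrow> real set" where
  "Rtk T n A k = (\<Union>i<n k. (T ^^ i) `
      (A k \<inter> Tz T (- int (n k)) ` A k \<inter> Tz T (- 2 * int (n k)) ` A k
           \<inter> Tz T (int (n k)) ` A k \<inter> Tz T (2 * int (n k)) ` A k))"

text \<open>The level l with x in T^l A_k (unique by disjointness).\<close>
definition lvl :: "(real \<Rightarrow> real) \<Rightarrow> (nat \<Rightarrow> nat) \<Rightarrow> (nat \<Rightarrow> real set) \<Rightarrow> nat \<Rightarrow> real \<Rightarrow> nat" where
  "lvl T n A k x = (THE l. l < n k \<and> x \<in> (T ^^ l) ` A k)"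

definition cfun :: "(real \<Rightarrow> real) \<Rightarrow> (real \<Rightarrow> real measure) \<Rightarrow> (nat \<Rightarrow> nat) \<Rightarrow> (nat \<Rightarrow> real set)
                    \<Rightarrow> nat \<Rightarrow> nat \<Rightarrow> real \<Rightarrow> real" where
  "cfun T \<sigma>x n A k i x =
     measure (\<sigma>x x) ((T ^^ ((i + lvl T n A k x) mod n k)) ` A k \<inter> Rk T n A k)"

end

theory Submission
  imports Defs
begin

text \<open>
  Let \<open>x\<close> lie in the level \<open>l\<close> of the tower over \<open>A k\<close>, so that \<open>y = T\<^sup>i x\<close> lies in the
  level \<open>L = l + i\<close>. Then \<open>c\<^sub>j(x)\<close> is the \<open>\<sigma>\<^sub>x\<close>-measure of the level with index \<open>(j + l) mod n\<^sub>k\<close>,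
  and by equivariance of the disintegration \<open>c\<^sub>j(y)\<close> is the \<open>\<sigma>\<^sub>x\<close>-measure of \<open>T\<^sup>-\<^sup>i\<close> applied to
  the level with index \<open>(j + L) mod n\<^sub>k\<close>. A point \<open>T\<^sup>b w\<close> of the smaller tower, where \<open>w\<close> returns to
  \<open>A k\<close> after \<open>n\<^sub>k\<close> steps forwards and backwards, is moved by \<open>T\<^sup>i\<close> to the level \<open>(b + i) mod n\<^sub>k\<close>;
  so the two disjoint families of sets agree on that tower, and the differences of their
  measures add up to at most twice the measure of its complement.
\<close>

lemma sum_abs_measure_diff_le_measure_compl:
  fixes M :: "'a measure" and E G :: "'i \<Rightarrow> 'a set"
  assumes "finite_measure M" and "finite I" and "R \<in> sets M"
    and E_sets: "\<And>j. j \<in> I \<Longrightarrow> E j \<in> sets M" and G_sets: "\<And>j. j \<in> I \<Longrightarrow> G j \<in> sets M"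
    and "disjoint_family_on E I" and "disjoint_family_on G I"
    and agree: "\<And>j. j \<in> I \<Longrightarrow> E j \<inter> R = G j \<inter> R"
  shows "(\<Sum>j\<in>I. \<bar>measure M (E j) - measure M (G j)\<bar>) \<le> 2 * measure M (space M - R)"
proof -
  interpret finite_measure M by fact
  have split: "measure M X = measure M (X \<inter> R) + measure M (X - R)" if "X \<in> sets M" for X
  proof -
    have "measure M X = measure M ((X \<inter> R) \<union> (X - R))" by (simp add: Int_Diff_Un)
    also have "\<dots> = measure M (X \<inter> R) + measure M (X - R)"
      using that \<open>R \<in> sets M\<close> by (intro finite_measure_Union) auto
    finally show ?thesis .
  qed
  have outside: "(\<Sum>j\<in>I. measure M (F j - R)) \<le> measure M (space M - R)"
    if "\<And>j. j \<in> I \<Longrightarrow> F j \<in> sets M" and "disjoint_family_on F I" for F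
  proof -
    have "(\<Sum>j\<in>I. measure M (F j - R)) = measure M (\<Union>j\<in>I. F j - R)"
      using that \<open>finite I\<close> \<open>R \<in> sets M\<close>
      by (intro finite_measure_finite_Union[symmetric]) (auto simp: disjoint_family_on_def)
    also have "\<dots> \<le> measure M (space M - R)"
      using that(1) sets.sets_into_space \<open>R \<in> sets M\<close> by (intro finite_measure_mono) auto
    finally show ?thesis .
  qed
  have "(\<Sum>j\<in>I. \<bar>measure M (E j) - measure M (G j)\<bar>)
      \<le> (\<Sum>j\<in>I. measure M (E j - R)) + (\<Sum>j\<in>I. measure M (G j - R))"
    unfolding sum.distrib[symmetric]
  proof (rule sum_mono)
    fix j assume "j \<in> I"
    then show "\<bar>measure M (E j) - measure M (G j)\<bar> \<le> measure M (E j - R) + measure M (G j - R)"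
      using split[OF E_sets] split[OF G_sets] agree[of j] measure_nonneg[of M "E j - R"]
        measure_nonneg[of M "G j - R"] by (smt (verit))
  qed
  also have "\<dots> \<le> 2 * measure M (space M - R)"
    using outside[of E] outside[of G] assms by simp
  finally show ?thesis .
qed

lemma space_lam: "space lam = {0..1}"
  by (simp add: lam_def space_restrict_space)

lemma sets_lam_subset: "E \<in> sets lam \<Longrightarrow> E \<subseteq> {0..1}"
  using sets.sets_into_space space_lam by blast

lemma measurable_funpow: "f \<in> M \<rightarrow>\<^sub>M M \<Longrightarrow> f ^^ m \<in> M \<rightarrow>\<^sub>M M"
  by (induction m) (auto intro: measurable_comp)

locale interval_bijection =
  fixes T :: "real \<Rightarrow> real"
  assumes bij: "bij_betw T {0..1} {0..1}"
begin

abbreviation Tinv :: "real \<Rightarrow> real" where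
  "Tinv \<equiv> inv_into {0..1} T"

lemma bij_betw_Tz: "bij_betw (Tz T i) {0..1} {0..1}"
  unfolding Tz_def using bij bij_betw_inv_into by (auto intro: bij_betw_funpow)

lemma Tz_in: "x \<in> {0..1} \<Longrightarrow> Tz T i x \<in> {0..1}"
  using bij_betw_apply[OF bij_betw_Tz] .

lemma Tz_nat: "Tz T (int m) = T ^^ m"
  by (simp add: Tz_def)

lemma Tz_succ: "x \<in> {0..1} \<Longrightarrow> Tz T (i + 1) x = T (Tz T i x)"
proof (cases "0 \<le> i")
  case True
  then have "nat (i + 1) = Suc (nat i)" by simp
  with True show ?thesis by (simp add: Tz_def)
next
  case False
  assume x: "x \<in> {0..1}"
  have "nat (- i) = Suc (nat (- (i + 1)))" using False by simp
  with False have "Tz T i x = Tinv (Tz T (i + 1) x)" by (simp add: Tz_def)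
  then show ?thesis using bij_betw_inv_into_right[OF bij Tz_in[OF x]] by metis
qed

lemma Tz_pred: "x \<in> {0..1} \<Longrightarrow> Tz T (i - 1) x = Tinv (Tz T i x)"
  using Tz_succ[of x "i - 1"] bij_betw_inv_into_left[OF bij Tz_in] by simp

lemma Tz_add: "x \<in> {0..1} \<Longrightarrow> Tz T (i + j) x = Tz T i (Tz T j x)"
proof (induction i rule: int_induct[where k = 0])
  case base
  then show ?case by (simp add: Tz_def)
next
  case (step1 i)
  have "Tz T (i + 1 + j) x = T (Tz T (i + j) x)"
    using Tz_succ[OF step1.prems, of "i + j"] by (simp add: add_ac)
  with step1 show ?case using Tz_succ[OF Tz_in] by simp
next
  case (step2 i)
  have "Tz T (i - 1 + j) x = Tinv (Tz T (i + j) x)"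
    using Tz_pred[OF step2.prems, of "i + j"] by (simp add: algebra_simps)
  with step2 show ?case using Tz_pred[OF Tz_in] by simp
qed

lemma Tz_inverse: "x \<in> {0..1} \<Longrightarrow> Tz T (- i) (Tz T i x) = x"
  using Tz_add[of x "- i" i] by (simp add: Tz_def)

lemma Tz_image_iff:
  assumes "E \<subseteq> {0..1}" shows "z \<in> Tz T i ` E \<longleftrightarrow> z \<in> {0..1} \<and> Tz T (- i) z \<in> E"
proof
  assume "z \<in> Tz T i ` E"
  then obtain e where "e \<in> E" "z = Tz T i e" by blast
  with assms show "z \<in> {0..1} \<and> Tz T (- i) z \<in> E" using Tz_in Tz_inverse by auto
next
  assume z: "z \<in> {0..1} \<and> Tz T (- i) z \<in> E"
  then have "z = Tz T i (Tz T (- i) z)" using Tz_inverse[of z "- i"] by simp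
  with z show "z \<in> Tz T i ` E" by blast
qed

lemma Tz_image_Tz_image:
  assumes "E \<subseteq> {0..1}" shows "Tz T (- i) ` Tz T i ` E = E"
proof -
  have "Tz T (- i) ` Tz T i ` E = id ` E"
    unfolding image_image by (rule image_cong) (use assms Tz_inverse in auto)
  then show ?thesis by simp
qed

lemma disjoint_family_on_Tz_image:
  assumes "\<And>j. j \<in> I \<Longrightarrow> F j \<subseteq> {0..1}" "disjoint_family_on F I"
  shows "disjoint_family_on (\<lambda>j. Tz T i ` F j) I"
  using assms inj_on_image_Int[OF bij_betw_imp_inj_on[OF bij_betw_Tz]]
  unfolding disjoint_family_on_def by (metis image_empty)

lemma Tz_funpow_image:
  assumes "x \<in> (T ^^ l) ` B" "B \<subseteq> {0..1}" "0 \<le> int l + i"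
  shows "Tz T i x \<in> (T ^^ nat (int l + i)) ` B"
proof -
  obtain a where a: "a \<in> B" "x = Tz T (int l) a" using assms(1) by (auto simp: Tz_nat)
  then have "Tz T i x = Tz T (int l + i) a"
    using Tz_add[of a i "int l"] assms(2) by (auto simp: add.commute)
  with a(1) assms(3) show ?thesis by (simp add: Tz_def)
qed

text \<open>\<open>w \<in> Tz T (- int N) ` B\<close> says that \<open>w\<close> returns to \<open>B\<close> after \<open>N\<close> steps forwards,
  \<open>w \<in> Tz T (int N) ` B\<close> that it returns after \<open>N\<close> steps backwards.\<close>
lemma Tz_two_sided_return_level:
  assumes B: "B \<subseteq> {0..1}" and w: "w \<in> B" "w \<in> Tz T (- int N) ` B" "w \<in> Tz T (int N) ` B"
    and m: "- int N \<le> m" "m < 2 * int N"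
  shows "Tz T m w \<in> (T ^^ nat (m mod int N)) ` B"
proof -
  have returns: "Tz T (int N) w \<in> B" "Tz T (- int N) w \<in> B"
    using w(2,3) Tz_image_iff[OF B] by auto
  obtain d where d: "Tz T d w \<in> B" "m - d = m mod int N"
  proof -
    consider "m < 0" | "0 \<le> m" "m < int N" | "int N \<le> m" by linarith
    then show ?thesis
    proof cases
      case 1
      have "m mod int N = (m + int N) mod int N" by simp
      also have "\<dots> = m + int N" using 1 m by (intro mod_pos_pos_trivial) auto
      finally have "m + int N = m mod int N" ..
      then show ?thesis using that[of "- int N"] returns by simp
    next
      case 2
      then show ?thesis using that[of 0] w(1) by (simp add: Tz_def)
    next
      case 3
      have "m mod int N = (m - int N) mod int N" by (metis diff_add_cancel mod_add_self2)
      also have "\<dots> = m - int N" using 3 m by (intro mod_pos_pos_trivial) auto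
      finally have "m - int N = m mod int N" ..
      then show ?thesis using that[of "int N"] returns by simp
    qed
  qed
  have "Tz T m w = Tz T (m - d) (Tz T d w)"
    using Tz_add[of w "m - d" d] w(1) B by auto
  with d m show ?thesis by (simp add: Tz_def)
qed

end

locale measurable_interval_bijection = interval_bijection +
  assumes measurable_T: "T \<in> lam \<rightarrow>\<^sub>M lam"
    and measurable_Tinv: "Tinv \<in> lam \<rightarrow>\<^sub>M lam"
begin

lemma measurable_Tz: "Tz T i \<in> lam \<rightarrow>\<^sub>M lam"
  unfolding Tz_def using measurable_T measurable_Tinv by (simp add: measurable_funpow)

lemma sets_lam_Tz_image:
  assumes "E \<in> sets lam" shows "Tz T i ` E \<in> sets lam"
proof -
  have "Tz T i ` E = Tz T (- i) -` E \<inter> space lam"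
    using Tz_image_iff[OF sets_lam_subset[OF assms]] space_lam by blast
  then show ?thesis using measurable_sets[OF measurable_Tz assms] by simp
qed

lemma sets_lam_level: "E \<in> sets lam \<Longrightarrow> (T ^^ m) ` E \<in> sets lam"
  using sets_lam_Tz_image[of E "int m"] by (simp add: Tz_nat)

text \<open>Negative powers reduce to positive ones applied at the point \<open>Tz T i x\<close>.\<close>
lemma measure_Tz_image:
  assumes equivariant: "\<forall>x\<in>{0..1}. \<forall>E\<in>sets lam. measure (\<sigma>x (T x)) (T ` E) = measure (\<sigma>x x) E"
    and x: "x \<in> {0..1}" and E: "E \<in> sets lam"
  shows "measure (\<sigma>x (Tz T i x)) (Tz T i ` E) = measure (\<sigma>x x) E"
proof -
  have nat_power: "measure (\<sigma>x ((T ^^ m) x)) ((T ^^ m) ` E) = measure (\<sigma>x x) E"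
    if "x \<in> {0..1}" "E \<in> sets lam" for m x E
  proof (induction m)
    case (Suc m)
    have "(T ^^ m) x \<in> {0..1}" using Tz_in[OF that(1), of "int m"] by (simp add: Tz_nat)
    then have "measure (\<sigma>x (T ((T ^^ m) x))) (T ` (T ^^ m) ` E) = measure (\<sigma>x x) E"
      using Suc equivariant sets_lam_level[OF that(2)] by simp
    then show ?case by (simp add: image_comp)
  qed simp
  show ?thesis
  proof (cases "0 \<le> i")
    case True
    then show ?thesis using nat_power[OF x E, of "nat i"] by (simp add: Tz_def)
  next
    case False
    have "measure (\<sigma>x x) E = measure (\<sigma>x (Tz T (- i) (Tz T i x))) (Tz T (- i) ` Tz T i ` E)"
      using Tz_inverse[OF x] Tz_image_Tz_image[OF sets_lam_subset[OF E]] by simp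
    also have "\<dots> = measure (\<sigma>x (Tz T i x)) (Tz T i ` E)"
    proof -
      have "Tz T (- i) = T ^^ nat (- i)" using False by (simp add: Tz_def)
      then show ?thesis using nat_power[OF Tz_in[OF x, of i] sets_lam_Tz_image[OF E, of i]] by simp
    qed
    finally show ?thesis by (rule sym)
  qed
qed

end

lemma mod_add_right_cancel_int: "((a::int) + c) mod n = (b + c) mod n \<longleftrightarrow> a mod n = b mod n"
  by (simp add: mod_eq_dvd_iff)

lemma mod_add_right_inj_nat:
  fixes j j' l N :: nat
  assumes "j < N" "j' < N" "(j + l) mod N = (j' + l) mod N"
  shows "j = j'"
  using assms mod_add_right_cancel_int[of "int j" "int l" "int N" "int j'"]
  by (simp flip: zmod_int of_nat_add)

lemma shifted_residue_iff:
  fixes N b c j l L :: nat and i :: int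
  assumes "b < N" "int L = int l + i" "int c = (i + int b) mod int N"
  shows "(j + L) mod N = c \<longleftrightarrow> (j + l) mod N = b"
proof -
  have "(j + L) mod N = c \<longleftrightarrow> int ((j + L) mod N) = int c" by linarith
  also have "\<dots> \<longleftrightarrow> ((int j + int l) + i) mod int N = (int b + i) mod int N"
    using assms(2,3) by (simp add: zmod_int algebra_simps)
  also have "\<dots> \<longleftrightarrow> (int j + int l) mod int N = int b mod int N"
    by (rule mod_add_right_cancel_int)
  also have "\<dots> \<longleftrightarrow> (j + l) mod N = b"
    using assms(1) by (simp flip: zmod_int of_nat_add)
  finally show ?thesis .
qed

locale rank1_tower = measurable_interval_bijection +
  fixes n :: "nat \<Rightarrow> nat" and A :: "nat \<Rightarrow> real set" and k :: nat
  assumes base_sets: "A k \<in> sets lam"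
    and levels_disjoint: "disjoint_family_on (\<lambda>i. (T ^^ i) ` A k) {..<n k}"
begin

lemma base_subset: "A k \<subseteq> {0..1}"
  using sets_lam_subset[OF base_sets] .

lemma level_unique:
  "c < n k \<Longrightarrow> c' < n k \<Longrightarrow> z \<in> (T ^^ c) ` A k \<Longrightarrow> z \<in> (T ^^ c') ` A k \<Longrightarrow> c = c'"
  using levels_disjoint unfolding disjoint_family_on_def by blast

lemma mem_level_mod_iff:
  assumes "c < n k" "z \<in> (T ^^ c) ` A k"
  shows "z \<in> (T ^^ (d mod n k)) ` A k \<longleftrightarrow> d mod n k = c"
  using assms level_unique[of "d mod n k" c z] by auto

lemma lvl_eqI: "c < n k \<Longrightarrow> z \<in> (T ^^ c) ` A k \<Longrightarrow> lvl T n A k z = c"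
  unfolding lvl_def using level_unique by blast

lemma level_subset_Rk: "c < n k \<Longrightarrow> (T ^^ c) ` A k \<subseteq> Rk T n A k"
  unfolding Rk_def by blast

lemma sets_lam_Rk: "Rk T n A k \<in> sets lam"
  unfolding Rk_def using sets_lam_level[OF base_sets] by blast

lemma Rtk_subset_Rk: "Rtk T n A k \<subseteq> Rk T n A k"
  unfolding Rtk_def Rk_def by blast

lemma sets_lam_Rtk: "Rtk T n A k \<in> sets lam"
  unfolding Rtk_def using base_sets sets_lam_Tz_image[OF base_sets]
  by (intro sets.finite_UN sets_lam_level sets.Int) auto

lemma cfun_eq_measure_level:
  assumes "l < n k" "x \<in> (T ^^ l) ` A k"
  shows "cfun T \<sigma>x n A k j x = measure (\<sigma>x x) ((T ^^ ((j + l) mod n k)) ` A k \<inter> Rk T n A k)"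
  unfolding cfun_def lvl_eqI[OF assms] ..

lemma disjoint_family_shifted_levels:
  "disjoint_family_on (\<lambda>j. (T ^^ ((j + l) mod n k)) ` A k \<inter> Rk T n A k) {..<n k}"
  unfolding disjoint_family_on_def
proof (intro ballI impI)
  fix j j' assume j: "j \<in> {..<n k}" "j' \<in> {..<n k}" "j \<noteq> j'"
  then have "(j + l) mod n k \<noteq> (j' + l) mod n k" "(j + l) mod n k < n k" "(j' + l) mod n k < n k"
    using mod_add_right_inj_nat[of j "n k" j' l] by auto
  then show "(T ^^ ((j + l) mod n k)) ` A k \<inter> Rk T n A k
      \<inter> ((T ^^ ((j' + l) mod n k)) ` A k \<inter> Rk T n A k) = {}"
    using level_unique by blast
qed

text \<open>The two-sided returns to \<open>A k\<close> built into \<open>Rtk\<close> keep the orbit inside the tower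
  while its level index wraps around once.\<close>
lemma Rtk_shifted_level:
  assumes z: "z \<in> Rtk T n A k" and i: "- int (n k) < i" "i < int (n k)"
  obtains b where "b < n k" "z \<in> (T ^^ b) ` A k"
    and "Tz T i z \<in> (T ^^ nat ((i + int b) mod int (n k))) ` A k"
proof -
  obtain b w where b: "b < n k" "z = (T ^^ b) w"
    and w: "w \<in> A k" "w \<in> Tz T (- int (n k)) ` A k" "w \<in> Tz T (int (n k)) ` A k"
    using z unfolding Rtk_def by blast
  have "Tz T i z = Tz T (i + int b) w"
    using b(2) Tz_add[of w i "int b"] w(1) base_subset by (auto simp: Tz_nat)
  moreover have "Tz T (i + int b) w \<in> (T ^^ nat ((i + int b) mod int (n k))) ` A k"
    using b(1) i by (intro Tz_two_sided_return_level[OF base_subset w]) auto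
  ultimately show ?thesis using b w(1) by (intro that[of b]) auto
qed

lemma Rtk_shifted_level_iff:
  assumes z: "z \<in> Rtk T n A k" and i: "- int (n k) < i" "i < int (n k)"
    and L: "int L = int l + i"
  shows "z \<in> (T ^^ ((j + l) mod n k)) ` A k \<longleftrightarrow> Tz T i z \<in> (T ^^ ((j + L) mod n k)) ` A k"
proof -
  obtain b where b: "b < n k" "z \<in> (T ^^ b) ` A k"
    and c: "Tz T i z \<in> (T ^^ nat ((i + int b) mod int (n k))) ` A k"
    using Rtk_shifted_level[OF z i] .
  define c where "c = nat ((i + int b) mod int (n k))"
  have c_less: "c < n k" and c_int: "int c = (i + int b) mod int (n k)"
    using b(1) by (auto simp: c_def nat_less_iff)
  have "z \<in> (T ^^ ((j + l) mod n k)) ` A k \<longleftrightarrow> (j + l) mod n k = b"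
    using mem_level_mod_iff[OF b] .
  also have "\<dots> \<longleftrightarrow> (j + L) mod n k = c"
    using shifted_residue_iff[OF b(1) L c_int] by simp
  also have "\<dots> \<longleftrightarrow> Tz T i z \<in> (T ^^ ((j + L) mod n k)) ` A k"
    using mem_level_mod_iff[OF c_less] c unfolding c_def by auto
  finally show ?thesis .
qed

lemma Rtk_shifted_levels_agree:
  assumes i: "- int (n k) < i" "i < int (n k)" and L: "int L = int l + i"
  shows "(T ^^ ((j + l) mod n k)) ` A k \<inter> Rk T n A k \<inter> Rtk T n A k
       = Tz T (- i) ` ((T ^^ ((j + L) mod n k)) ` A k \<inter> Rk T n A k) \<inter> Rtk T n A k"
proof -
  have "z \<in> (T ^^ ((j + l) mod n k)) ` A k
      \<longleftrightarrow> z \<in> Tz T (- i) ` ((T ^^ ((j + L) mod n k)) ` A k \<inter> Rk T n A k)"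
    if z: "z \<in> Rtk T n A k" for z
  proof -
    obtain b where b: "b < n k" and "Tz T i z \<in> (T ^^ nat ((i + int b) mod int (n k))) ` A k"
      using Rtk_shifted_level[OF z i] .
    moreover have "nat ((i + int b) mod int (n k)) < n k"
      using b by (simp add: nat_less_iff)
    ultimately have "Tz T i z \<in> Rk T n A k" using level_subset_Rk by blast
    moreover have "z \<in> {0..1}" using z Rtk_subset_Rk sets_lam_subset[OF sets_lam_Rk] by blast
    moreover have "(T ^^ ((j + L) mod n k)) ` A k \<inter> Rk T n A k \<subseteq> {0..1}"
      using sets_lam_subset[OF sets_lam_Rk] by blast
    ultimately show ?thesis
      using Rtk_shifted_level_iff[OF z i L] Tz_image_iff[of _ z "- i"] by auto
  qed
  then show ?thesis using Rtk_subset_Rk by blast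
qed

lemma cfun_Tz_eq_measure:
  assumes equivariant: "\<forall>x\<in>{0..1}. \<forall>E\<in>sets lam. measure (\<sigma>x (T x)) (T ` E) = measure (\<sigma>x x) E"
    and x: "x \<in> {0..1}" and L: "L < n k" "Tz T i x \<in> (T ^^ L) ` A k"
  shows "cfun T \<sigma>x n A k j (Tz T i x)
       = measure (\<sigma>x x) (Tz T (- i) ` ((T ^^ ((j + L) mod n k)) ` A k \<inter> Rk T n A k))"
proof -
  define F where "F = (T ^^ ((j + L) mod n k)) ` A k \<inter> Rk T n A k"
  have F: "F \<in> sets lam" unfolding F_def using sets_lam_level[OF base_sets] sets_lam_Rk by blast
  have "cfun T \<sigma>x n A k j (Tz T i x) = measure (\<sigma>x (Tz T i x)) F"
    unfolding F_def by (rule cfun_eq_measure_level[OF L])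
  also have "\<dots> = measure (\<sigma>x (Tz T i x)) (Tz T i ` Tz T (- i) ` F)"
    using Tz_image_Tz_image[OF sets_lam_subset[OF F], of "- i"] by simp
  also have "\<dots> = measure (\<sigma>x x) (Tz T (- i) ` F)"
    by (rule measure_Tz_image[OF equivariant x sets_lam_Tz_image[OF F]])
  finally show ?thesis unfolding F_def .
qed

end

theorem mainTheorem4:
  fixes T :: "real \<Rightarrow> real" and n :: "nat \<Rightarrow> nat" and A :: "nat \<Rightarrow> real set"
    and \<sigma> :: "(real \<times> real) measure" and \<sigma>x :: "real \<Rightarrow> real measure"
    and k l :: nat and x :: real and i :: int
  assumes "invertible_mpt T" and "ergodic T" and "rigid_rank1 T n A"
    and "self_joining T \<sigma>" and "disintegration \<sigma> \<sigma>x"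
    and "\<forall>x\<in>{0..1}. \<forall>E\<in>sets lam. measure (\<sigma>x (T x)) (T ` E) = measure (\<sigma>x x) E"
    and "l < n k" and "x \<in> (T ^^ l) ` A k"
    and "- int l \<le> i" and "i < int (n k) - int l"
  shows "(\<Sum>j<n k. \<bar>cfun T \<sigma>x n A k j x - cfun T \<sigma>x n A k j (Tz T i x)\<bar>)
           \<le> 2 * measure (\<sigma>x x) ({0..1} - Rtk T n A k)"
proof -
  interpret rank1_tower T n A k
    using assms(1,3) unfolding invertible_mpt_def rigid_rank1_def by unfold_locales auto
  have x: "x \<in> {0..1}"
    using assms(8) base_subset Tz_in[of _ "int l"] by (auto simp: Tz_nat)
  define L where "L = nat (int l + i)"
  have L: "int L = int l + i" "L < n k" and i: "- int (n k) < i" "i < int (n k)"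
    using assms(7,9,10) by (auto simp: L_def)
  have y: "Tz T i x \<in> (T ^^ L) ` A k"
    using Tz_funpow_image[OF assms(8) base_subset] assms(9) by (simp add: L_def)
  define E where "E j = (T ^^ ((j + l) mod n k)) ` A k \<inter> Rk T n A k" for j
  define G where "G j = Tz T (- i) ` ((T ^^ ((j + L) mod n k)) ` A k \<inter> Rk T n A k)" for j
  have \<sigma>x: "finite_measure (\<sigma>x x)" "sets (\<sigma>x x) = sets lam"
    using assms(5) x unfolding disintegration_def prob_space_def by auto
  then have "space (\<sigma>x x) = {0..1}" using sets_eq_imp_space_eq space_lam by metis
  moreover have "(\<Sum>j<n k. \<bar>measure (\<sigma>x x) (E j) - measure (\<sigma>x x) (G j)\<bar>)
      \<le> 2 * measure (\<sigma>x x) (space (\<sigma>x x) - Rtk T n A k)"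
  proof (rule sum_abs_measure_diff_le_measure_compl)
    show "disjoint_family_on G {..<n k}"
      unfolding G_def using sets_lam_subset[OF sets_lam_Rk]
      by (intro disjoint_family_on_Tz_image disjoint_family_shifted_levels) auto
  qed (use \<sigma>x sets_lam_Rtk sets_lam_Rk sets_lam_level[OF base_sets] sets_lam_Tz_image
         disjoint_family_shifted_levels Rtk_shifted_levels_agree[OF i L(1)]
       in \<open>auto simp: E_def G_def\<close>)
  ultimately show ?thesis
    using cfun_eq_measure_level[OF assms(7,8)] cfun_Tz_eq_measure[OF assms(6) x L(2) y]
    by (simp add: E_def G_def)
qed

end
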